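(* Let $B_1(0)\subseteq\mathbb{C}$ be the open unit disc and let $f, f_1, f_2: B_1(0)\setminus\{0\} \to \mathbb{C}$ be smooth functions, each of which either extends smoothly to the origin or is holomorphic on $B_1(0)\setminus\{0\}$ with a simple pole at the origin. Assume moreover that $f_1$ is holomorphic with a simple pole at the origin. Then the function \[ \varphi := \frac{f}{|f_1|^2 + |f_2|^2}, \qquad \varphi(0) := 0, \] is well defined and smooth in a neighbourhood of the origin. Moreover, if $f$ is holomorphic with a simple pole at the origin, then the real differential $D\varphi(0):\mathbb{R}^2\to\mathbb{R}^2$ has full rank. *)

theory Defs
  imports "HOL-Complex_Analysis.Complex_Analysis"
begin

text \<open>Iterated real (Frechet) directional derivatives of a function on the plane = complex numbers,
  viewed as a real 2-dimensional vector space.\<close>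
definition iter_dderiv :: "complex list \<Rightarrow> (complex \<Rightarrow> complex) \<Rightarrow> (complex \<Rightarrow> complex)" where
  "iter_dderiv ds f = fold (\<lambda>v g. \<lambda>z. frechet_derivative g (at z) v) ds f"

definition smooth_on :: "complex set \<Rightarrow> (complex \<Rightarrow> complex) \<Rightarrow> bool" where
  "smooth_on S f \<longleftrightarrow> (\<forall>ds. \<forall>z\<in>S. iter_dderiv ds f differentiable (at z))"

definition hol_simple_pole :: "(complex \<Rightarrow> complex) \<Rightarrow> bool" where
  "hol_simple_pole f \<longleftrightarrow> f holomorphic_on (ball 0 1 - {0}) \<and> is_pole f 0 \<and> zorder f 0 = -1"

definition admissible :: "(complex \<Rightarrow> complex) \<Rightarrow> bool" where
  "admissible f \<longleftrightarrow> smooth_on (ball 0 1 - {0}) f \<and>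
     ((\<exists>g. smooth_on (ball 0 1) g \<and> (\<forall>z\<in>ball 0 1 - {0}. g z = f z)) \<or> hol_simple_pole f)"

end

theory Submission
  imports Defs
begin

text \<open>Multiplying numerator and denominator by \<open>|z|\<^sup>2 = z * cnj z\<close>, near the origin
  \<open>\<phi> z = (z f z) * cnj z / (|z f1 z|\<^sup>2 + |z f2 z|\<^sup>2)\<close>. Here \<open>z f\<close> and \<open>z f2\<close> extend smoothly
  across 0, and \<open>z f1\<close> extends holomorphically with the nonzero residue of \<open>f1\<close> as its value at
  0, so the denominator is smooth and nonvanishing and the quotient is smooth. If \<open>f\<close> has a
  simple pole as well, then \<open>z f\<close> does not vanish at 0 either; since \<open>cnj\<close> vanishes at 0, the
  differential of \<open>\<phi>\<close> at 0 is \<open>v \<mapsto> c * cnj v\<close> with \<open>c \<noteq> 0\<close>, an invertible real-linear map.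

  Smoothness is preserved by sums, products, conjugation and quotients because any family of
  functions that is closed under directional differentiation consists of smooth functions.\<close>

lemma iter_dderiv_Nil [simp]: "iter_dderiv [] f = f"
  by (simp add: iter_dderiv_def)

lemma iter_dderiv_Cons:
  "iter_dderiv (v # ds) f = iter_dderiv ds (\<lambda>z. frechet_derivative f (at z) v)"
  by (simp add: iter_dderiv_def)

text \<open>Unlike the library's \<open>frechet_derivative_transform_within_open\<close>, no differentiability is
  needed: both sides are chosen by the same predicate.\<close>
lemma frechet_derivative_cong_open:
  assumes "open S" "z \<in> S" "\<And>w. w \<in> S \<Longrightarrow> f w = g w"
  shows "frechet_derivative f (at z) = frechet_derivative g (at z)"
proof -
  have "(f has_derivative D) (at z) \<longleftrightarrow> (g has_derivative D) (at z)" for D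
    using has_derivative_transform_within_open[OF _ assms(1,2), of f D UNIV g]
      has_derivative_transform_within_open[OF _ assms(1,2), of g D UNIV f] assms(3) by auto
  then show ?thesis
    unfolding frechet_derivative_def by simp
qed

lemma differentiable_transform_within_open:
  assumes "f differentiable (at z)" "open S" "z \<in> S" "\<And>w. w \<in> S \<Longrightarrow> f w = g w"
  shows "g differentiable (at z)"
  using assms has_derivative_transform_within_open[OF _ assms(2,3), of f _ UNIV g]
  unfolding differentiable_def by auto

lemma iter_dderiv_cong_open:
  assumes "open S" "\<And>w. w \<in> S \<Longrightarrow> f w = g w" "z \<in> S"
  shows "iter_dderiv ds f z = iter_dderiv ds g z"
  using assms(2,3)
proof (induction ds arbitrary: f g z)
  case Nil
  then show ?case by simp
next
  case (Cons v ds)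
  have "frechet_derivative f (at w) v = frechet_derivative g (at w) v" if "w \<in> S" for w
    using frechet_derivative_cong_open[OF assms(1) that Cons.prems(1)] by simp
  then show ?case
    unfolding iter_dderiv_Cons using Cons.prems(2) by (rule Cons.IH)
qed

lemma smooth_on_cong:
  assumes "open S" "smooth_on S f" "\<And>z. z \<in> S \<Longrightarrow> f z = g z"
  shows "smooth_on S g"
  unfolding smooth_on_def
proof (intro allI ballI)
  fix ds z
  assume "z \<in> S"
  moreover have "iter_dderiv ds f w = iter_dderiv ds g w" if "w \<in> S" for w
    using iter_dderiv_cong_open[OF assms(1) assms(3) that] .
  ultimately show "iter_dderiv ds g differentiable (at z)"
    using differentiable_transform_within_open[OF _ assms(1)] assms(2)
    unfolding smooth_on_def by blast
qed

lemma smooth_on_subset: "smooth_on S f \<Longrightarrow> T \<subseteq> S \<Longrightarrow> smooth_on T f"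
  unfolding smooth_on_def by blast

lemma smooth_on_imp_differentiable: "smooth_on S f \<Longrightarrow> z \<in> S \<Longrightarrow> f differentiable (at z)"
  unfolding smooth_on_def by (metis iter_dderiv_Nil)

lemma smooth_on_has_derivative:
  "smooth_on S f \<Longrightarrow> z \<in> S \<Longrightarrow> (f has_derivative frechet_derivative f (at z)) (at z)"
  using smooth_on_imp_differentiable frechet_derivative_works by blast

lemma smooth_on_frechet_derivative:
  "smooth_on S f \<Longrightarrow> smooth_on S (\<lambda>z. frechet_derivative f (at z) v)"
  unfolding smooth_on_def by (metis iter_dderiv_Cons)

lemma smooth_on_family:
  assumes "open S" "P p"
    and closed: "\<And>p v. P p \<Longrightarrow> P (D p v)"
    and deriv: "\<And>p z. P p \<Longrightarrow> z \<in> S \<Longrightarrow> (F p has_derivative (\<lambda>v. F (D p v) z)) (at z)"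
  shows "smooth_on S (F p)"
proof -
  have "\<forall>p. P p \<longrightarrow> (\<forall>z\<in>S. iter_dderiv ds (F p) differentiable (at z))" for ds
  proof (induction ds)
    case Nil
    show ?case
      unfolding iter_dderiv_Nil differentiable_def using deriv by blast
  next
    case (Cons v ds)
    show ?case
    proof (intro allI impI ballI)
      fix p z
      assume "P p" "z \<in> S"
      have Df_eq: "frechet_derivative (F p) (at w) v = F (D p v) w" if "w \<in> S" for w
        using frechet_derivative_at[OF deriv[OF \<open>P p\<close> that], symmetric] by simp
      have "iter_dderiv ds (F (D p v)) w = iter_dderiv (v # ds) (F p) w" if "w \<in> S" for w
        unfolding iter_dderiv_Cons by (rule iter_dderiv_cong_open[OF assms(1) Df_eq[symmetric] that])
      moreover have "iter_dderiv ds (F (D p v)) differentiable (at z)"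
        using Cons.IH closed[OF \<open>P p\<close>] \<open>z \<in> S\<close> by blast
      ultimately show "iter_dderiv (v # ds) (F p) differentiable (at z)"
        using differentiable_transform_within_open[OF _ assms(1) \<open>z \<in> S\<close>] by blast
    qed
  qed
  then show ?thesis
    using assms(2) unfolding smooth_on_def by blast
qed

lemma holomorphic_on_imp_smooth_on:
  assumes "open S" "g holomorphic_on S"
  shows "smooth_on S g"
proof (rule smooth_on_family[where F = "\<lambda>g. g" and P = "\<lambda>g. g holomorphic_on S"
      and D = "\<lambda>g v z. deriv g z * v", OF assms])
  fix g v
  assume "g holomorphic_on S"
  then show "(\<lambda>z. deriv g z * v) holomorphic_on S"
    by (intro holomorphic_on_mult holomorphic_deriv assms(1) holomorphic_on_const)
next
  fix g z
  assume "g holomorphic_on S" "z \<in> S"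
  from holomorphic_derivI[OF this(1) assms(1) this(2)]
  show "(g has_derivative (\<lambda>v. deriv g z * v)) (at z)"
    unfolding has_field_derivative_def .
qed

lemma smooth_on_const: "open S \<Longrightarrow> smooth_on S (\<lambda>z. c)"
  by (intro holomorphic_on_imp_smooth_on holomorphic_on_const)

lemma smooth_on_ident: "open S \<Longrightarrow> smooth_on S (\<lambda>z. z)"
  by (intro holomorphic_on_imp_smooth_on holomorphic_on_ident)

lemma has_derivative_sum_list_mult:
  fixes ps :: "(('a::real_normed_vector \<Rightarrow> 'b::real_normed_algebra) \<times> ('a \<Rightarrow> 'b)) list"
  assumes "\<forall>(a, b)\<in>set ps. a differentiable (at z) \<and> b differentiable (at z)"
  shows "((\<lambda>z. \<Sum>(a, b)\<leftarrow>ps. a z * b z) has_derivative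
     (\<lambda>v. \<Sum>(a, b)\<leftarrow>ps. a z * frechet_derivative b (at z) v + frechet_derivative a (at z) v * b z))
     (at z)"
  using assms
proof (induction ps)
  case Nil
  then show ?case by simp
next
  case (Cons p ps)
  obtain a b where p: "p = (a, b)" by fastforce
  have "a differentiable (at z)" "b differentiable (at z)"
    using Cons.prems p by auto
  then have "((\<lambda>z. a z * b z) has_derivative
      (\<lambda>v. a z * frechet_derivative b (at z) v + frechet_derivative a (at z) v * b z)) (at z)"
    by (intro has_derivative_mult) (simp_all add: frechet_derivative_works)
  from has_derivative_add[OF this Cons.IH] Cons.prems p show ?case by simp
qed

text \<open>Products alone are not closed under differentiation, finite sums of products are.\<close>
lemma smooth_on_sum_list_mult:
  assumes "open S" "\<forall>(a, b)\<in>set ps. smooth_on S a \<and> smooth_on S b"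
  shows "smooth_on S (\<lambda>z. \<Sum>(a, b)\<leftarrow>ps. a z * b z)"
proof -
  define D where "D ps v = map (\<lambda>(a, b). (a, \<lambda>z. frechet_derivative b (at z) v)) ps @
    map (\<lambda>(a, b). (\<lambda>z. frechet_derivative a (at z) v, b)) ps"
    for ps :: "((complex \<Rightarrow> complex) \<times> (complex \<Rightarrow> complex)) list" and v
  have D_sum: "(\<Sum>(a, b)\<leftarrow>D ps v. a z * b z) =
      (\<Sum>(a, b)\<leftarrow>ps. a z * frechet_derivative b (at z) v + frechet_derivative a (at z) v * b z)"
    for ps v z
    unfolding D_def by (simp add: sum_list_addf case_prod_unfold o_def)
  show ?thesis
  proof (rule smooth_on_family[where F = "\<lambda>ps z. \<Sum>(a, b)\<leftarrow>ps. a z * b z" and D = D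
        and P = "\<lambda>ps. \<forall>(a, b)\<in>set ps. smooth_on S a \<and> smooth_on S b"])
    fix ps v
    assume "\<forall>(a, b)\<in>set ps. smooth_on S a \<and> smooth_on S b"
    then show "\<forall>(a, b)\<in>set (D ps v). smooth_on S a \<and> smooth_on S b"
      unfolding D_def by (force simp: case_prod_unfold intro: smooth_on_frechet_derivative)
  next
    fix ps z
    assume "\<forall>(a, b)\<in>set ps. smooth_on S a \<and> smooth_on S b" "z \<in> S"
    then have "\<forall>(a, b)\<in>set ps. a differentiable (at z) \<and> b differentiable (at z)"
      by (auto intro: smooth_on_imp_differentiable)
    from has_derivative_sum_list_mult[OF this]
    show "((\<lambda>z. \<Sum>(a, b)\<leftarrow>ps. a z * b z) has_derivative
        (\<lambda>v. \<Sum>(a, b)\<leftarrow>D ps v. a z * b z)) (at z)"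
      by (simp only: D_sum)
  qed (use assms in auto)
qed

lemma smooth_on_mult:
  assumes "open S" "smooth_on S f" "smooth_on S g"
  shows "smooth_on S (\<lambda>z. f z * g z)"
  using smooth_on_sum_list_mult[of S "[(f, g)]"] assms by simp

lemma smooth_on_add:
  assumes "open S" "smooth_on S f" "smooth_on S g"
  shows "smooth_on S (\<lambda>z. f z + g z)"
  using smooth_on_sum_list_mult[of S "[(f, \<lambda>_. 1), (g, \<lambda>_. 1)]"] assms smooth_on_const
  by simp

lemma smooth_on_diff:
  assumes "open S" "smooth_on S f" "smooth_on S g"
  shows "smooth_on S (\<lambda>z. f z - g z)"
  using smooth_on_sum_list_mult[of S "[(f, \<lambda>_. 1), (g, \<lambda>_. - 1)]"] assms smooth_on_const
  by simp

lemma smooth_on_cnj: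
  assumes "open S" "smooth_on S f"
  shows "smooth_on S (\<lambda>z. cnj (f z))"
  by (rule smooth_on_family[where F = "\<lambda>f z. cnj (f z)" and P = "smooth_on S"
        and D = "\<lambda>f v z. frechet_derivative f (at z) v", OF assms])
    (auto intro: smooth_on_frechet_derivative has_derivative_cnj smooth_on_has_derivative)

lemma smooth_on_divide:
  assumes "open S" "smooth_on S g" "smooth_on S f" "\<And>z. z \<in> S \<Longrightarrow> f z \<noteq> 0"
  shows "smooth_on S (\<lambda>z. g z / f z)"
proof -
  define P where "P = (\<lambda>(g, f). smooth_on S g \<and> smooth_on S f \<and> (\<forall>z\<in>S. f z \<noteq> (0::complex)))"
  define D :: "(complex \<Rightarrow> complex) \<times> (complex \<Rightarrow> complex) \<Rightarrow> complex \<Rightarrow> _"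
    where "D = (\<lambda>(g, f) v.
    (\<lambda>z. frechet_derivative g (at z) v * f z - g z * frechet_derivative f (at z) v, \<lambda>z. f z * f z))"
  have "smooth_on S ((\<lambda>(g, f) z. g z / f z) (g, f))"
  proof (rule smooth_on_family[where P = P and D = D])
    fix p :: "(complex \<Rightarrow> complex) \<times> (complex \<Rightarrow> complex)" and v
    assume "P p"
    then obtain g f where p: "p = (g, f)" and "smooth_on S g" "smooth_on S f" "\<forall>z\<in>S. f z \<noteq> 0"
      unfolding P_def by auto
    then show "P (D p v)"
      unfolding P_def D_def
      by (auto intro!: smooth_on_diff smooth_on_mult smooth_on_frechet_derivative \<open>open S\<close>)
  next
    fix p :: "(complex \<Rightarrow> complex) \<times> (complex \<Rightarrow> complex)" and z
    assume "P p" "z \<in> S"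
    then obtain g f where p: "p = (g, f)" and "smooth_on S g" "smooth_on S f" "f z \<noteq> 0"
      unfolding P_def by auto
    then have "((\<lambda>z. g z / f z) has_derivative (\<lambda>v. - g z * (inverse (f z) *
        frechet_derivative f (at z) v * inverse (f z)) + frechet_derivative g (at z) v / f z)) (at z)"
      using \<open>z \<in> S\<close> by (intro has_derivative_divide smooth_on_has_derivative)
    then show "((\<lambda>(g, f) z. g z / f z) p has_derivative (\<lambda>v. (\<lambda>(g, f) z. g z / f z) (D p v) z)) (at z)"
      unfolding p D_def prod.case
      by (rule has_derivative_eq_rhs) (use \<open>f z \<noteq> 0\<close> in \<open>simp add: fun_eq_iff field_simps\<close>)
  qed (use assms in \<open>auto simp: P_def\<close>)
  then show ?thesis
    by simp
qed

lemma hol_simple_pole_factor: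
  fixes h :: "complex \<Rightarrow> complex"
  assumes "hol_simple_pole h"
  obtains r H where "r > 0" "H holomorphic_on ball 0 r" "H 0 \<noteq> 0"
    "\<And>z. z \<in> ball 0 r - {0} \<Longrightarrow> H z = z * h z"
proof -
  have hol: "h holomorphic_on ball 0 1 - {0}" and pole: "is_pole h 0" and order: "zorder h 0 = -1"
    using assms unfolding hol_simple_pole_def by auto
  have "isolated_singularity_at h 0"
    by (rule isolated_singularity_at_holomorphic[OF hol]) auto
  moreover have "not_essential h 0"
    using pole unfolding not_essential_def by blast
  moreover have "\<exists>\<^sub>F w in at (0::complex). h w \<noteq> 0"
    using non_zero_neighbour_pole[OF pole] by (simp add: eventually_frequently)
  ultimately obtain r where r: "zor_poly h 0 0 \<noteq> 0" "r > 0" "zor_poly h 0 holomorphic_on cball 0 r"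
     "\<forall>w\<in>cball 0 r - {0}. h w = zor_poly h 0 w * (w - 0) powi (zorder h 0)"
    using zorder_exist by blast
  show thesis
  proof
    show "zor_poly h 0 holomorphic_on ball 0 r"
      using r(3) by (rule holomorphic_on_subset) auto
    fix z :: complex
    assume z: "z \<in> ball 0 r - {0}"
    then have "h z = zor_poly h 0 z * z powi (-1)"
      using r(4) order by auto
    then show "zor_poly h 0 z = z * h z"
      using z by (simp add: power_int_minus field_simps)
  qed (use r in auto)
qed

lemma admissible_times_ident:
  fixes h :: "complex \<Rightarrow> complex"
  assumes "admissible h"
  obtains r H where "r > 0" "smooth_on (ball 0 r) H" "\<And>z. z \<in> ball 0 r - {0} \<Longrightarrow> H z = z * h z"
proof -
  from assms consider g where "smooth_on (ball 0 1) g" "\<forall>z\<in>ball 0 1 - {0}. g z = h z"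
    | "hol_simple_pole h"
    unfolding admissible_def by blast
  then show thesis
  proof cases
    case (1 g)
    have "smooth_on (ball 0 1) (\<lambda>z. z * g z)"
      using 1(1) by (intro smooth_on_mult smooth_on_ident open_ball)
    with 1(2) show thesis
      using that[of 1 "\<lambda>z. z * g z"] by simp
  next
    case 2
    then show thesis
      using hol_simple_pole_factor holomorphic_on_imp_smooth_on[OF open_ball] that by metis
  qed
qed

text \<open>The weight \<open>E\<close> extends \<open>|z f1|\<^sup>2 + |z f2|\<^sup>2\<close>; it does not vanish at the origin because
  \<open>z f1\<close> tends to the nonzero residue of \<open>f1\<close> there.\<close>
lemma simple_pole_weight_factor:
  fixes f1 f2 :: "complex \<Rightarrow> complex"
  assumes "hol_simple_pole f1" "admissible f2"
  obtains r E where "r > 0" "smooth_on (ball 0 r) E" "\<And>z. z \<in> ball 0 r \<Longrightarrow> E z \<noteq> 0"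
    "\<And>z. z \<in> ball 0 r - {0} \<Longrightarrow> E z = z * cnj z * of_real ((cmod (f1 z))\<^sup>2 + (cmod (f2 z))\<^sup>2)"
proof -
  obtain r1 H1 where H1: "r1 > 0" "H1 holomorphic_on ball 0 r1" "H1 0 \<noteq> 0"
      "\<And>z. z \<in> ball 0 r1 - {0} \<Longrightarrow> H1 z = z * f1 z"
    using hol_simple_pole_factor[OF assms(1)] by blast
  obtain r2 H2 where H2: "r2 > 0" "smooth_on (ball 0 r2) H2"
      "\<And>z. z \<in> ball 0 r2 - {0} \<Longrightarrow> H2 z = z * f2 z"
    using admissible_times_ident[OF assms(2)] by blast
  define E where "E z = H1 z * cnj (H1 z) + H2 z * cnj (H2 z)" for z
  have "smooth_on (ball 0 (min r1 r2)) H1"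
    using holomorphic_on_imp_smooth_on[OF open_ball H1(2)] by (rule smooth_on_subset) auto
  moreover have "smooth_on (ball 0 (min r1 r2)) H2"
    using H2(2) by (rule smooth_on_subset) auto
  ultimately have "smooth_on (ball 0 (min r1 r2)) E"
    unfolding E_def by (intro smooth_on_add smooth_on_mult smooth_on_cnj open_ball)
  moreover have "E 0 \<noteq> 0"
  proof -
    have "E 0 = of_real ((cmod (H1 0))\<^sup>2 + (cmod (H2 0))\<^sup>2)"
      unfolding E_def by (simp only: of_real_add complex_norm_square)
    moreover have "(cmod (H1 0))\<^sup>2 + (cmod (H2 0))\<^sup>2 > 0"
      using H1(3) by (simp add: add_pos_nonneg)
    ultimately show ?thesis
      by (metis of_real_eq_0_iff order_less_irrefl)
  qed
  ultimately obtain e where e: "e > 0" "\<And>y. dist 0 y < e \<Longrightarrow> E y \<noteq> 0"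
    using continuous_at_avoid smooth_on_imp_differentiable differentiable_imp_continuous_within
      H1(1) H2(1) by (metis centre_in_ball min_less_iff_conj)
  have "E z = z * cnj z * of_real ((cmod (f1 z))\<^sup>2 + (cmod (f2 z))\<^sup>2)"
    if "z \<in> ball 0 (min r1 r2) - {0}" for z
  proof -
    have "of_real ((cmod (f1 z))\<^sup>2 + (cmod (f2 z))\<^sup>2) = f1 z * cnj (f1 z) + f2 z * cnj (f2 z)"
      by (simp only: of_real_add complex_norm_square)
    then show ?thesis
      using that H1(4) H2(3) by (simp add: E_def algebra_simps)
  qed
  with e \<open>smooth_on (ball 0 (min r1 r2)) E\<close> show thesis
    by (intro that[of "min (min r1 r2) e" E]) (auto simp: H1(1) H2(1) intro: smooth_on_subset)
qed

lemma quotient_eq_times_cnj_divide: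
  fixes f H E :: "complex \<Rightarrow> complex" and q :: "complex \<Rightarrow> real"
  assumes "E z \<noteq> 0" "z \<noteq> 0 \<Longrightarrow> E z = z * cnj z * of_real (q z)" "z \<noteq> 0 \<Longrightarrow> H z = z * f z"
  shows "(if z = 0 then 0 else f z / of_real (q z)) = H z * cnj z / E z"
proof (cases "z = 0")
  case False
  then have "of_real (q z) \<noteq> (0::complex)"
    using assms(1,2) by auto
  with False assms(1-3) show ?thesis
    by (simp add: field_simps)
qed simp

lemma has_derivative_times_cnj_divide_at_0:
  assumes "H differentiable (at 0)" "E differentiable (at 0)" "E 0 \<noteq> 0"
  shows "((\<lambda>z. H z * cnj z / E z) has_derivative (\<lambda>v. H 0 / E 0 * cnj v)) (at 0)"
proof -
  have "((\<lambda>z. H z * cnj z) has_derivative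
      (\<lambda>v. H 0 * cnj v + frechet_derivative H (at 0) v * cnj 0)) (at 0)"
    using assms(1) by (intro has_derivative_mult has_derivative_cnj has_derivative_ident)
      (simp add: frechet_derivative_works)
  from has_derivative_divide[OF this assms(2)[unfolded frechet_derivative_works] assms(3)]
  show ?thesis
    by (simp add: field_simps)
qed

lemma dim_range_times_cnj:
  assumes "c \<noteq> 0"
  shows "dim (range (\<lambda>v. c * cnj v)) = DIM(complex)"
proof -
  have "range (\<lambda>v. c * cnj v) = UNIV"
  proof (rule surjI)
    fix w
    show "c * cnj (cnj (w / c)) = w"
      using assms by simp
  qed
  then show ?thesis
    by simp
qed

lemma dim_range_frechet_derivative_times_cnj_divide:
  assumes "open S" "0 \<in> S" "\<And>z. z \<in> S \<Longrightarrow> \<phi> z = H z * cnj z / E z"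
    and "H differentiable (at 0)" "E differentiable (at 0)" "H 0 \<noteq> 0" "E 0 \<noteq> 0"
  shows "dim (range (frechet_derivative \<phi> (at 0))) = DIM(complex)"
proof -
  have "(\<phi> has_derivative (\<lambda>v. H 0 / E 0 * cnj v)) (at 0)"
    using has_derivative_times_cnj_divide_at_0[OF assms(4,5,7)] assms(1,2)
    by (rule has_derivative_transform_within_open) (simp add: assms(3))
  then have "frechet_derivative \<phi> (at 0) = (\<lambda>v. H 0 / E 0 * cnj v)"
    by (rule frechet_derivative_at[symmetric])
  then show ?thesis
    using dim_range_times_cnj[of "H 0 / E 0"] assms(6,7) by simp
qed

theorem lemma2p1:
  fixes f f1 f2 :: "complex \<Rightarrow> complex"
  assumes "admissible f" and "admissible f1" and "admissible f2"
    and "hol_simple_pole f1"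
  defines "\<phi> \<equiv> (\<lambda>z. if z = 0 then 0 else f z / of_real ((cmod (f1 z))\<^sup>2 + (cmod (f2 z))\<^sup>2))"
  shows "(\<exists>r>0. (\<forall>z\<in>ball 0 r - {0}. (cmod (f1 z))\<^sup>2 + (cmod (f2 z))\<^sup>2 \<noteq> 0) \<and> smooth_on (ball 0 r) \<phi>)
         \<and> (hol_simple_pole f \<longrightarrow> dim (range (frechet_derivative \<phi> (at 0))) = DIM(complex))"
proof -
  obtain rE E where E: "rE > 0" "smooth_on (ball 0 rE) E" "\<And>z. z \<in> ball 0 rE \<Longrightarrow> E z \<noteq> 0"
      "\<And>z. z \<in> ball 0 rE - {0} \<Longrightarrow> E z = z * cnj z * of_real ((cmod (f1 z))\<^sup>2 + (cmod (f2 z))\<^sup>2)"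
    using simple_pole_weight_factor[OF assms(4,3)] by blast
  have \<phi>_eq: "\<phi> z = H z * cnj z / E z" if "z \<in> ball 0 rE" "z \<noteq> 0 \<Longrightarrow> H z = z * f z" for H z
    unfolding \<phi>_def using that E(3,4) by (intro quotient_eq_times_cnj_divide) auto
  have nonzero: "(cmod (f1 z))\<^sup>2 + (cmod (f2 z))\<^sup>2 \<noteq> 0" if "z \<in> ball 0 rE - {0}" for z
    using E(3)[of z] E(4)[OF that] that by auto
  obtain r0 H0 where H0: "r0 > 0" "smooth_on (ball 0 r0) H0"
      "\<And>z. z \<in> ball 0 r0 - {0} \<Longrightarrow> H0 z = z * f z"
    using admissible_times_ident[OF assms(1)] by blast
  have "smooth_on (ball 0 (min rE r0)) E"
    using E(2) by (rule smooth_on_subset) auto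
  moreover have "smooth_on (ball 0 (min rE r0)) H0"
    using H0(2) by (rule smooth_on_subset) auto
  ultimately have "smooth_on (ball 0 (min rE r0)) (\<lambda>z. H0 z * cnj z / E z)"
    using E(3) by (intro smooth_on_divide smooth_on_mult smooth_on_cnj smooth_on_ident open_ball) auto
  moreover have "H0 z * cnj z / E z = \<phi> z" if "z \<in> ball 0 (min rE r0)" for z
    using \<phi>_eq[where H = H0 and z = z] H0(3)[of z] that by simp
  ultimately have smooth: "smooth_on (ball 0 (min rE r0)) \<phi>"
    by (rule smooth_on_cong[OF open_ball])
  have "dim (range (frechet_derivative \<phi> (at 0))) = DIM(complex)" if pole: "hol_simple_pole f"
  proof -
    obtain rf Hf where Hf: "rf > 0" "Hf holomorphic_on ball 0 rf" "Hf 0 \<noteq> 0"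
        "\<And>z. z \<in> ball 0 rf - {0} \<Longrightarrow> Hf z = z * f z"
      using hol_simple_pole_factor[OF pole] by blast
    have "Hf differentiable (at 0)"
      using Hf(1) by (intro field_differentiable_imp_differentiable
          holomorphic_on_imp_differentiable_at[OF Hf(2) open_ball]) simp
    show ?thesis
    proof (rule dim_range_frechet_derivative_times_cnj_divide[where S = "ball 0 (min rE rf)"
          and H = Hf and E = E])
      show "E differentiable (at 0)"
        using E(1) by (intro smooth_on_imp_differentiable[OF E(2)]) simp
      fix z :: complex
      assume "z \<in> ball 0 (min rE rf)"
      then show "\<phi> z = Hf z * cnj z / E z"
        using Hf(4) by (intro \<phi>_eq) auto
    qed (use E(1,3) Hf(1,3) \<open>Hf differentiable (at 0)\<close> in auto)
  qed
  with smooth nonzero E(1) H0(1) show ?thesis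
    by (intro conjI impI exI[of _ "min rE r0"]) auto
qed

end
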